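(* Let $r\geq1$ be an integer, $(a_{\boldsymbol n})\in\mathbf C^{\mathbf N^r}$ and $\rho>0$ real. Suppose there is $\varepsilon>0$ such that the series $F(\boldsymbol z)=\prod_i(1-\rho z_i)\sum_{\boldsymbol n\in\mathbf N^r}a_{\boldsymbol n}\prod_iz_i^{n_i}$ converges absolutely on the domain $|z_i|\leq\rho^{-1}+\varepsilon$ ($i=1,\dots,r$). Let $\|F\|_{\rho^{-1}}=\max_{|\eta_i|=1}|F((\eta_i\rho^{-1})_i)|$. Then for all $\boldsymbol n\in\mathbf N^r$, $$|a_{\boldsymbol n}|\leq\prod_i(n_i+1)\,\|F\|_{\rho^{-1}}\,\rho^{\sum_in_i}.$$ *)

theory Defs
  imports "HOL-Analysis.Analysis"
begin

text \<open>Multi-indices in N^r are functions 'r => nat for a finite index type 'r with CARD('r) = r.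
  The coefficient of z^n in prod_i (1 - rho z_i) * sum_m a_m z^m.\<close>
definition Fcoeff :: "real \<Rightarrow> (('r::finite \<Rightarrow> nat) \<Rightarrow> complex) \<Rightarrow> ('r \<Rightarrow> nat) \<Rightarrow> complex" where
  "Fcoeff \<rho> a n = (\<Sum>S\<in>Pow (UNIV::'r set).
      (- complex_of_real \<rho>) ^ card S *
      (if (\<forall>i\<in>S. 1 \<le> n i) then a (\<lambda>i. if i \<in> S then n i - 1 else n i) else 0))"

definition monomial :: "('r::finite \<Rightarrow> complex) \<Rightarrow> ('r \<Rightarrow> nat) \<Rightarrow> complex" where
  "monomial z n = (\<Prod>i\<in>UNIV. z i ^ n i)"

definition Fser :: "real \<Rightarrow> (('r::finite \<Rightarrow> nat) \<Rightarrow> complex) \<Rightarrow> ('r \<Rightarrow> complex) \<Rightarrow> complex" where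
  "Fser \<rho> a z = infsum (\<lambda>n. Fcoeff \<rho> a n * monomial z n) UNIV"

definition Fnorm :: "real \<Rightarrow> (('r::finite \<Rightarrow> nat) \<Rightarrow> complex) \<Rightarrow> real" where
  "Fnorm \<rho> a = (SUP \<eta>\<in>{\<eta>::'r \<Rightarrow> complex. \<forall>i. norm (\<eta> i) = 1}.
       norm (Fser \<rho> a (\<lambda>i. \<eta> i / complex_of_real \<rho>)))"

end

theory Submission
  imports Defs "HOL-Library.Real_Mod"
begin

(*
  Write F(z) = \<Sum>_k c_k z^k with c = Fcoeff \<rho> a. Cauchy's estimate on the torus of polyradius
  1/\<rho> gives |c_k| \<le> \<parallel>F\<parallel> \<rho>^|k|. Instead of a Cauchy integral we average F(\<eta>/\<rho>) conj(\<eta>^m)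
  over the points \<eta> whose coordinates are N-th roots of unity: by orthogonality of characters
  this recovers c_m up to the coefficients outside the cube {0..N-1}^r, whose total mass tends
  to 0 by absolute convergence. Dividing F by \<Prod>_i (1 - \<rho> z_i) means multiplying by geometric
  series, so a_n = \<Sum>_{m \<le> n} c_m \<rho>^(|n| - |m|), a sum of \<Prod>_i (n_i + 1) terms, each of norm at
  most \<parallel>F\<parallel> \<rho>^|n|.
*)

lemma sum_Pow_minus_one_power_card:
  assumes "finite A"
  shows "(\<Sum>S\<in>Pow A. (-1::'a::comm_ring_1) ^ card S) = (if A = {} then 1 else 0)"
  using prod_diff_conv_sum[OF assms, of "\<lambda>_. 1::'a" "\<lambda>_. 1"] assms
  by (simp add: zero_power card_gt_0_iff) (metis card_0_eq power_0_left)

lemma sum_if_Suc: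
  fixes p :: "'r::finite \<Rightarrow> nat"
  shows "(\<Sum>i\<in>UNIV. if i \<in> S then Suc (p i) else p i) = sum p UNIV + card S"
proof -
  have "(\<Sum>i\<in>UNIV. if i \<in> S then Suc (p i) else p i) = (\<Sum>i\<in>UNIV. p i + of_bool (i \<in> S))"
    by (intro sum.cong) auto
  then show ?thesis
    by (simp add: sum.distrib)
qed

lemma sum_box_reindex_shift:
  fixes n :: "'r::finite \<Rightarrow> nat" and h :: "('r \<Rightarrow> nat) \<Rightarrow> 'a::comm_monoid_add"
  shows "(\<Sum>m\<in>{m\<in>(\<Pi>\<^sub>E i\<in>UNIV. {..n i}). \<forall>i\<in>S. 1 \<le> m i}. h m)
       = (\<Sum>p\<in>{p\<in>(\<Pi>\<^sub>E i\<in>UNIV. {..n i}). \<forall>i\<in>S. p i < n i}. h (\<lambda>i. if i \<in> S then Suc (p i) else p i))"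
  by (rule sum.reindex_bij_witness[where j="\<lambda>m i. if i \<in> S then m i - 1 else m i"
        and i="\<lambda>p i. if i \<in> S then Suc (p i) else p i"])
     (auto simp: PiE_UNIV_domain Pi_def fun_eq_iff Suc_le_eq intro!: arg_cong[where f=h] dest: bspec
           intro: le_trans[OF diff_le_self] less_le_trans[OF diff_less])

lemma sum_Fcoeff_box:
  fixes a :: "('r::finite \<Rightarrow> nat) \<Rightarrow> complex"
  shows "(\<Sum>m\<in>(\<Pi>\<^sub>E i\<in>UNIV. {..n i}). Fcoeff \<rho> a m * of_real \<rho> ^ (sum n UNIV - sum m UNIV)) = a n"
proof -
  define x where "x = complex_of_real \<rho>"
  define B where "B = (\<Pi>\<^sub>E i\<in>UNIV. {..n i})"
  define T where "T p = {i. p i < n i}" for p :: "'r \<Rightarrow> nat"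
  define g where "g p = a p * x ^ (sum n UNIV - sum p UNIV)" for p
  have B: "p \<in> B \<longleftrightarrow> (\<forall>i. p i \<le> n i)" for p
    by (simp add: B_def PiE_UNIV_domain Pi_def)
  have unshift: "(\<lambda>i. if i \<in> S then (if i \<in> S then Suc (p i) else p i) - 1
      else if i \<in> S then Suc (p i) else p i) = p" for S p
    by auto
  have shift: "(-x) ^ card S * (a p * x ^ (sum n UNIV - sum (\<lambda>i. if i \<in> S then Suc (p i) else p i) UNIV))
      = (-1) ^ card S * g p"
    if "p \<in> B" "S \<subseteq> T p" for S p
  proof -
    have "(\<Sum>i\<in>UNIV. if i \<in> S then Suc (p i) else p i) \<le> sum n UNIV"
      using that by (intro sum_mono) (auto simp: B T_def Suc_le_eq)
    then have "sum n UNIV - sum p UNIV = card S + (sum n UNIV - sum (\<lambda>i. if i \<in> S then Suc (p i) else p i) UNIV)"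
      by (simp add: sum_if_Suc)
    then show ?thesis
      by (simp add: g_def power_add power_minus[of x] mult_ac)
  qed
  have "(\<Sum>m\<in>B. Fcoeff \<rho> a m * x ^ (sum n UNIV - sum m UNIV))
      = (\<Sum>S\<in>Pow UNIV. \<Sum>m\<in>{m\<in>B. \<forall>i\<in>S. 1 \<le> m i}.
           (-x) ^ card S * (a (\<lambda>i. if i \<in> S then m i - 1 else m i) * x ^ (sum n UNIV - sum m UNIV)))"
    unfolding Fcoeff_def x_def sum_distrib_right
    by (subst sum.swap) (auto simp: sum.inter_filter B_def finite_PiE intro!: sum.cong)
  also have "\<dots> = (\<Sum>S\<in>Pow UNIV. \<Sum>p\<in>{p\<in>B. S \<subseteq> T p}. (-1) ^ card S * g p)"
    unfolding B_def by (rule sum.cong[OF refl], subst sum_box_reindex_shift)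
      (auto simp: T_def subset_iff unshift intro!: sum.cong shift simp flip: B_def)
  \<comment> \<open>each \<open>p\<close> now carries an alternating sum over the subsets of \<open>T p\<close>, which vanishes unless \<open>p = n\<close>\<close>
  also have "\<dots> = (\<Sum>p\<in>B. g p * (\<Sum>S\<in>Pow (T p). (-1) ^ card S))"
    by (subst sum.swap_restrict) (auto simp: B_def finite_PiE sum_distrib_left mult_ac intro!: sum.cong)
  also have "\<dots> = (\<Sum>p\<in>B. if p = n then g n else 0)"
  proof (intro sum.cong refl)
    fix p assume "p \<in> B"
    then have "T p = {} \<longleftrightarrow> p = n"
      by (auto simp: B T_def fun_eq_iff intro: antisym) (meson le_less)
    then show "g p * (\<Sum>S\<in>Pow (T p). (-1) ^ card S) = (if p = n then g n else 0)"
      by (simp add: sum_Pow_minus_one_power_card)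
  qed
  also have "\<dots> = a n"
    using B[of n] by (simp add: B_def finite_PiE g_def)
  finally show ?thesis
    by (simp add: B_def x_def)
qed

lemma sum_cis_roots_of_unity_orthogonal:
  assumes "k < N" "m < N"
  shows "(\<Sum>t<N. cis (2 * pi * real t / N) ^ k * cnj (cis (2 * pi * real t / N) ^ m)) = (if k = m then of_nat N else 0)"
proof -
  define q where "q = cis (2 * pi * (real k - real m) / N)"
  have "cis (2 * pi * real t / N) ^ k * cnj (cis (2 * pi * real t / N) ^ m) = q ^ t" for t
    unfolding q_def complex_cnj_power cis_cnj
    by (simp only: Complex.DeMoivre cis_mult, rule arg_cong[where f = cis])
      (simp add: diff_divide_distrib[symmetric] algebra_simps)
  then have sum_q: "(\<Sum>t<N. cis (2 * pi * real t / N) ^ k * cnj (cis (2 * pi * real t / N) ^ m)) = (\<Sum>t<N. q ^ t)"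
    by simp
  have "q ^ N = cis (2 * pi * of_int (int k - int m))"
    unfolding q_def Complex.DeMoivre using assms by (intro arg_cong[where f = cis]) simp
  then have "q ^ N = 1"
    by (simp only: cis_multiple_2pi Ints_of_int)
  moreover have "q \<noteq> 1" if "k \<noteq> m"
  proof
    assume "q = 1"
    then obtain n :: int where "2 * pi * (real k - real m) / N = of_int n * (2 * pi)"
      unfolding q_def cis_eq_1_iff by blast
    then have "2 * pi * (real k - real m) = 2 * pi * (of_int n * real N)"
      using assms by (simp add: field_simps)
    then have "real k - real m = of_int n * real N"
      by simp
    then have "int k - int m = n * int N"
      by (metis of_int_eq_iff of_int_diff of_int_mult of_int_of_nat_eq)
    moreover have "\<bar>int k - int m\<bar> < int N"
      using assms by linarith
    ultimately show False
      using \<open>k \<noteq> m\<close> mult_right_mono[of 1 "\<bar>n\<bar>" "int N"] by (cases "n = 0") (auto simp: abs_mult, linarith)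
  qed
  moreover have "q = 1" if "k = m"
    using that by (simp add: q_def)
  ultimately show ?thesis
    unfolding sum_q by (auto simp: sum_gp_strict)
qed

definition torus_grid_point :: "nat \<Rightarrow> ('r \<Rightarrow> nat) \<Rightarrow> 'r \<Rightarrow> complex" where
  "torus_grid_point N j i = cis (2 * pi * real (j i) / N)"

lemma norm_torus_grid_point [simp]: "norm (torus_grid_point N j i) = 1"
  by (simp add: torus_grid_point_def)

lemma norm_monomial_torus:
  assumes "\<forall>i. norm (\<eta> i) = 1"
  shows "norm (monomial \<eta> k) = 1"
  using assms by (simp add: monomial_def prod_norm[symmetric] norm_power)

lemma sum_torus_grid_monomial_orthogonal:
  fixes k m :: "'r::finite \<Rightarrow> nat"
  assumes "k \<in> UNIV \<rightarrow>\<^sub>E {..<N}" "m \<in> UNIV \<rightarrow>\<^sub>E {..<N}"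
  shows "(\<Sum>j\<in>UNIV \<rightarrow>\<^sub>E {..<N}. monomial (torus_grid_point N j) k * cnj (monomial (torus_grid_point N j) m))
       = (if k = m then of_nat N ^ CARD('r) else 0)"
proof -
  have "(\<Sum>j\<in>UNIV \<rightarrow>\<^sub>E {..<N}. monomial (torus_grid_point N j) k * cnj (monomial (torus_grid_point N j) m))
      = (\<Prod>i\<in>UNIV. \<Sum>t<N. cis (2 * pi * real t / N) ^ k i * cnj (cis (2 * pi * real t / N) ^ m i))"
    by (subst prod_sum_PiE)
      (simp_all add: monomial_def torus_grid_point_def prod.distrib[symmetric])
  also have "\<dots> = (\<Prod>i\<in>UNIV. if k i = m i then of_nat N else 0)"
    using assms by (intro prod.cong refl sum_cis_roots_of_unity_orthogonal) auto
  also have "\<dots> = (if k = m then of_nat N ^ CARD('r) else 0)"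
    by (auto simp: fun_eq_iff)
  finally show ?thesis .
qed

lemma norm_sum_torus_grid_monomial_le:
  fixes k m :: "'r::finite \<Rightarrow> nat"
  shows "norm (\<Sum>j\<in>UNIV \<rightarrow>\<^sub>E {..<N}. monomial (torus_grid_point N j) k * cnj (monomial (torus_grid_point N j) m))
       \<le> real N ^ CARD('r)"
proof -
  have "norm (\<Sum>j\<in>UNIV \<rightarrow>\<^sub>E {..<N}. monomial (torus_grid_point N j) k * cnj (monomial (torus_grid_point N j) m))
      \<le> (\<Sum>j\<in>(UNIV::'r set) \<rightarrow>\<^sub>E {..<N}. 1)"
    by (intro norm_sum[THEN order_trans] sum_mono) (simp add: norm_mult norm_monomial_torus)
  also have "\<dots> = real N ^ CARD('r)"
    by (simp add: card_PiE)
  finally show ?thesis .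
qed

lemma infsum_sum_finite:
  fixes f :: "'j \<Rightarrow> 'a \<Rightarrow> 'b::{topological_comm_monoid_add, t2_space}"
  assumes "finite J" "\<And>j. j \<in> J \<Longrightarrow> f j summable_on A"
  shows "(\<Sum>\<^sub>\<infinity>x\<in>A. \<Sum>j\<in>J. f j x) = (\<Sum>j\<in>J. \<Sum>\<^sub>\<infinity>x\<in>A. f j x)"
proof -
  have "(\<lambda>x. \<Sum>j\<in>J. f j x) summable_on A \<and> (\<Sum>\<^sub>\<infinity>x\<in>A. \<Sum>j\<in>J. f j x) = (\<Sum>j\<in>J. \<Sum>\<^sub>\<infinity>x\<in>A. f j x)"
    using assms by (induction J rule: finite_induct) (auto simp: summable_on_add infsum_add)
  then show ?thesis ..
qed

lemma abs_summable_on_mult_bounded: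
  fixes w c :: "'a \<Rightarrow> 'b::real_normed_div_algebra"
  assumes "(\<lambda>k. norm (w k)) summable_on A" and "\<And>k. norm (c k) \<le> B"
  shows "(\<lambda>k. norm (w k * c k)) summable_on A"
  by (rule Infinite_Sum.abs_summable_on_comparison_test'[where f = "\<lambda>k. w k * c k" and g = "\<lambda>k. norm (w k) * B"])
    (use assms in \<open>auto intro!: summable_on_cmult_left simp: norm_mult mult_left_mono\<close>)

lemma summable_on_mult_bounded:
  fixes w c :: "'a \<Rightarrow> 'b::{real_normed_div_algebra, banach}"
  assumes "(\<lambda>k. norm (w k)) summable_on A" and "\<And>k. norm (c k) \<le> B"
  shows "(\<lambda>k. w k * c k) summable_on A"
  using abs_summable_on_mult_bounded[OF assms] by (rule Infinite_Sum.abs_summable_summable)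

lemma sum_infsum_torus_mult_cnj:
  fixes w :: "('r::finite \<Rightarrow> nat) \<Rightarrow> complex"
  assumes summable: "(\<lambda>k. norm (w k)) summable_on UNIV"
    and "finite J" and torus: "\<And>j i. j \<in> J \<Longrightarrow> norm (\<eta> j i) = 1"
  shows "(\<Sum>j\<in>J. (\<Sum>\<^sub>\<infinity>k. w k * monomial (\<eta> j) k) * cnj (monomial (\<eta> j) m))
       = (\<Sum>\<^sub>\<infinity>k. w k * (\<Sum>j\<in>J. monomial (\<eta> j) k * cnj (monomial (\<eta> j) m)))"
proof -
  have norm_monomial: "norm (monomial (\<eta> j) k) = 1" if "j \<in> J" for j k
    using torus[OF that] by (simp add: norm_monomial_torus)
  have "(\<Sum>j\<in>J. (\<Sum>\<^sub>\<infinity>k. w k * monomial (\<eta> j) k) * cnj (monomial (\<eta> j) m))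
      = (\<Sum>j\<in>J. \<Sum>\<^sub>\<infinity>k. w k * (monomial (\<eta> j) k * cnj (monomial (\<eta> j) m)))"
    by (intro sum.cong refl, subst infsum_cmult_left[symmetric])
      (auto simp: mult.assoc norm_monomial intro: summable_on_mult_bounded[OF summable])
  also have "\<dots> = (\<Sum>\<^sub>\<infinity>k. \<Sum>j\<in>J. w k * (monomial (\<eta> j) k * cnj (monomial (\<eta> j) m)))"
    by (rule infsum_sum_finite[symmetric, OF \<open>finite J\<close>])
      (auto simp: norm_mult norm_monomial intro: summable_on_mult_bounded[OF summable])
  finally show ?thesis
    by (simp add: sum_distrib_left)
qed

lemma norm_coeff_le_torus_bound_plus_tail:
  fixes w :: "('r::finite \<Rightarrow> nat) \<Rightarrow> complex"
  assumes summable: "(\<lambda>k. norm (w k)) summable_on UNIV"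
    and bound: "\<And>\<eta>. \<forall>i. norm (\<eta> i) = 1 \<Longrightarrow> norm (\<Sum>\<^sub>\<infinity>k. w k * monomial \<eta> k) \<le> M"
    and m: "m \<in> UNIV \<rightarrow>\<^sub>E {..<N}"
  shows "norm (w m) \<le> M + (\<Sum>\<^sub>\<infinity>k\<in>-(UNIV \<rightarrow>\<^sub>E {..<N}). norm (w k))"
proof -
  define C :: "('r \<Rightarrow> nat) set" where "C = UNIV \<rightarrow>\<^sub>E {..<N}"
  define D where "D k = (\<Sum>j\<in>C. monomial (torus_grid_point N j) k * cnj (monomial (torus_grid_point N j) m))" for k
  define K where "K = real N ^ CARD('r)"
  have "K > 0"
    using m by (auto simp: K_def PiE_UNIV_domain)
  have "finite C"
    by (simp add: C_def finite_PiE)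
  have norm_D: "norm (D k) \<le> K" for k
    unfolding D_def C_def K_def by (rule norm_sum_torus_grid_monomial_le)
  have summable_outside: "(\<lambda>k. norm (w k)) summable_on -C"
    by (rule summable_on_subset_banach[OF summable]) simp
  have "norm (\<Sum>\<^sub>\<infinity>k. w k * D k) \<le> K * M"
  proof -
    have "norm (\<Sum>\<^sub>\<infinity>k. w k * D k) \<le> (\<Sum>j\<in>C. M)"
      unfolding D_def sum_infsum_torus_mult_cnj[OF summable \<open>finite C\<close>, symmetric, OF norm_torus_grid_point]
      by (intro norm_sum[THEN order_trans] sum_mono) (simp add: norm_mult norm_monomial_torus bound)
    then show ?thesis
      by (simp add: C_def K_def card_PiE)
  qed
  moreover have "(\<Sum>\<^sub>\<infinity>k. w k * D k) = of_real K * w m + (\<Sum>\<^sub>\<infinity>k\<in>-C. w k * D k)"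
  proof -
    have "(\<Sum>\<^sub>\<infinity>k. w k * D k) = (\<Sum>k\<in>C. w k * D k) + (\<Sum>\<^sub>\<infinity>k\<in>-C. w k * D k)"
      using infsum_Un_disjoint[of "\<lambda>k. w k * D k" C "-C"] \<open>finite C\<close> summable_outside
      by (simp add: summable_on_mult_bounded[OF _ norm_D])
    also have "(\<Sum>k\<in>C. w k * D k) = (\<Sum>k\<in>C. if k = m then of_real K * w m else 0)"
      using m by (intro sum.cong) (auto simp: D_def C_def K_def sum_torus_grid_monomial_orthogonal)
    also have "\<dots> = of_real K * w m"
      using m \<open>finite C\<close> by (simp add: C_def)
    finally show ?thesis .
  qed
  moreover have "norm (\<Sum>\<^sub>\<infinity>k\<in>-C. w k * D k) \<le> K * (\<Sum>\<^sub>\<infinity>k\<in>-C. norm (w k))"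
  proof -
    have "norm (\<Sum>\<^sub>\<infinity>k\<in>-C. w k * D k) \<le> (\<Sum>\<^sub>\<infinity>k\<in>-C. norm (w k) * K)"
      by (intro norm_infsum_bound[THEN order_trans] infsum_mono abs_summable_on_mult_bounded[OF summable_outside norm_D]
          summable_on_cmult_left[OF summable_outside])
        (simp_all add: norm_mult norm_D mult_left_mono)
    then show ?thesis
      by (simp only: infsum_cmult_left') (simp add: mult.commute)
  qed
  ultimately have "K * norm (w m) \<le> K * M + K * (\<Sum>\<^sub>\<infinity>k\<in>-C. norm (w k))"
    using \<open>K > 0\<close> norm_triangle_ineq4[of "of_real K * w m + (\<Sum>\<^sub>\<infinity>k\<in>-C. w k * D k)" "\<Sum>\<^sub>\<infinity>k\<in>-C. w k * D k"]
    by (simp add: norm_mult)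
  then show ?thesis
    using \<open>K > 0\<close> by (simp add: C_def flip: distrib_left)
qed

lemma eventually_infsum_outside_cube_le:
  fixes f :: "('r::finite \<Rightarrow> nat) \<Rightarrow> real"
  assumes summable: "f summable_on UNIV" and nonneg: "\<And>k. f k \<ge> 0" and "e > 0"
  shows "eventually (\<lambda>N. (\<Sum>\<^sub>\<infinity>k\<in>-(UNIV \<rightarrow>\<^sub>E {..<N}). f k) \<le> e) sequentially"
proof -
  obtain F where F: "finite F" "dist (sum f F) (\<Sum>\<^sub>\<infinity>k. f k) \<le> e"
    using infsum_finite_approximation[OF summable \<open>e > 0\<close>] by blast
  have tail_le: "(\<Sum>\<^sub>\<infinity>k\<in>-(UNIV \<rightarrow>\<^sub>E {..<N}). f k) \<le> e" if N: "N > (\<Sum>k\<in>F. \<Sum>i\<in>UNIV. k i)" for N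
  proof -
    have "F \<subseteq> UNIV \<rightarrow>\<^sub>E {..<N}"
    proof
      fix k assume "k \<in> F"
      then have "k i \<le> (\<Sum>k\<in>F. \<Sum>i\<in>UNIV. k i)" for i
        using \<open>finite F\<close> by (intro member_le_sum[THEN order_trans[rotated]] member_le_sum) auto
      then show "k \<in> UNIV \<rightarrow>\<^sub>E {..<N}"
        using N by (auto simp: PiE_UNIV_domain intro: le_less_trans)
    qed
    then have "(\<Sum>\<^sub>\<infinity>k\<in>-(UNIV \<rightarrow>\<^sub>E {..<N}). f k) \<le> (\<Sum>\<^sub>\<infinity>k\<in>-F. f k)"
      by (intro infsum_mono_neutral summable_on_subset_banach[OF summable]) (auto simp: nonneg)
    also have "\<dots> = (\<Sum>\<^sub>\<infinity>k. f k) - sum f F"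
      using \<open>finite F\<close> summable by (simp add: Compl_eq_Diff_UNIV infsum_Diff)
    also have "\<dots> \<le> e"
      using F(2) by (simp add: dist_real_def)
    finally show ?thesis .
  qed
  show ?thesis
    by (rule eventually_mono[OF eventually_gt_at_top tail_le])
qed

lemma norm_coeff_le_torus_bound:
  fixes w :: "('r::finite \<Rightarrow> nat) \<Rightarrow> complex"
  assumes summable: "(\<lambda>k. norm (w k)) summable_on UNIV"
    and bound: "\<And>\<eta>. \<forall>i. norm (\<eta> i) = 1 \<Longrightarrow> norm (\<Sum>\<^sub>\<infinity>k. w k * monomial \<eta> k) \<le> M"
  shows "norm (w m) \<le> M"
proof (rule field_le_epsilon)
  fix e :: real assume "e > 0"
  have "eventually (\<lambda>N. m \<in> UNIV \<rightarrow>\<^sub>E {..<N}) sequentially"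
    using eventually_gt_at_top[of "Max (range m)"] by eventually_elim (auto simp: PiE_UNIV_domain)
  moreover have "eventually (\<lambda>N. (\<Sum>\<^sub>\<infinity>k\<in>-(UNIV \<rightarrow>\<^sub>E {..<N}). norm (w k)) \<le> e) sequentially"
    by (rule eventually_infsum_outside_cube_le[OF summable _ \<open>e > 0\<close>]) simp
  ultimately have "eventually (\<lambda>N. m \<in> UNIV \<rightarrow>\<^sub>E {..<N} \<and>
      (\<Sum>\<^sub>\<infinity>k\<in>-(UNIV \<rightarrow>\<^sub>E {..<N}). norm (w k)) \<le> e) sequentially"
    by (rule eventually_conj)
  then obtain N where N: "m \<in> UNIV \<rightarrow>\<^sub>E {..<N}" "(\<Sum>\<^sub>\<infinity>k\<in>-(UNIV \<rightarrow>\<^sub>E {..<N}). norm (w k)) \<le> e"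
    by (auto simp: eventually_sequentially)
  have "norm (w m) \<le> M + (\<Sum>\<^sub>\<infinity>k\<in>-(UNIV \<rightarrow>\<^sub>E {..<N}). norm (w k))"
    by (rule norm_coeff_le_torus_bound_plus_tail[OF summable _ N(1)]) (rule bound)
  with N(2) show "norm (w m) \<le> M + e"
    by linarith
qed

lemma monomial_mult: "monomial (\<lambda>i. x i * y i) k = monomial x k * monomial y k"
  by (simp add: monomial_def power_mult_distrib prod.distrib)

lemma norm_Fser_torus_le_Fnorm:
  assumes summable: "(\<lambda>k. norm (Fcoeff \<rho> a k * monomial (\<lambda>_. of_real (1 / \<rho>)) k)) summable_on UNIV"
    and \<eta>: "\<forall>i. norm (\<eta> i) = 1"
  shows "norm (Fser \<rho> a (\<lambda>i. \<eta> i / of_real \<rho>)) \<le> Fnorm \<rho> a"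
proof -
  have norm_Fser_le: "norm (Fser \<rho> a (\<lambda>i. \<xi> i / of_real \<rho>))
      \<le> (\<Sum>\<^sub>\<infinity>k. norm (Fcoeff \<rho> a k * monomial (\<lambda>_. of_real (1 / \<rho>)) k))"
    if "\<forall>i. norm (\<xi> i) = 1" for \<xi>
  proof -
    have "(\<lambda>k. norm (Fcoeff \<rho> a k * monomial (\<lambda>i. \<xi> i / of_real \<rho>) k))
        = (\<lambda>k. norm (Fcoeff \<rho> a k * monomial (\<lambda>_. of_real (1 / \<rho>)) k))"
      using monomial_mult[of \<xi> "\<lambda>_. of_real (1 / \<rho>)"] norm_monomial_torus[OF that]
      by (simp add: norm_mult divide_inverse)
    then show ?thesis
      using norm_infsum_bound[of "\<lambda>k. Fcoeff \<rho> a k * monomial (\<lambda>i. \<xi> i / of_real \<rho>) k" UNIV] summable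
      by (simp add: Fser_def)
  qed
  show ?thesis
    unfolding Fnorm_def
    by (rule cSUP_upper) (use \<eta> norm_Fser_le in \<open>auto intro!: bdd_aboveI2\<close>)
qed

lemma norm_Fcoeff_le_Fnorm:
  assumes "\<rho> > 0"
    and summable: "(\<lambda>k. norm (Fcoeff \<rho> a k * monomial (\<lambda>_. of_real (1 / \<rho>)) k)) summable_on UNIV"
  shows "norm (Fcoeff \<rho> a m) \<le> Fnorm \<rho> a * \<rho> ^ sum m UNIV"
proof -
  have "Fser \<rho> a (\<lambda>i. \<eta> i / of_real \<rho>)
      = (\<Sum>\<^sub>\<infinity>k. Fcoeff \<rho> a k * monomial (\<lambda>_. of_real (1 / \<rho>)) k * monomial \<eta> k)" for \<eta>
    using monomial_mult[of \<eta> "\<lambda>_. of_real (1 / \<rho>)"] by (simp add: Fser_def divide_inverse mult_ac)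
  then have "norm (Fcoeff \<rho> a m * monomial (\<lambda>_. of_real (1 / \<rho>)) m) \<le> Fnorm \<rho> a"
    using norm_Fser_torus_le_Fnorm[OF summable] by (intro norm_coeff_le_torus_bound[OF summable]) auto
  moreover have "norm (monomial (\<lambda>_. of_real (1 / \<rho>)) m) = (1 / \<rho>) ^ sum m UNIV"
    using \<open>\<rho> > 0\<close> by (simp add: monomial_def prod_norm[symmetric] norm_power norm_divide power_sum)
  ultimately have "norm (Fcoeff \<rho> a m) / \<rho> ^ sum m UNIV \<le> Fnorm \<rho> a"
    by (simp add: norm_mult power_one_over)
  then show ?thesis
    using \<open>\<rho> > 0\<close> by (simp add: pos_divide_le_eq)
qed

lemma norm_le_of_Fcoeff_bound:
  fixes a :: "('r::finite \<Rightarrow> nat) \<Rightarrow> complex"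
  assumes "\<rho> \<ge> 0" and bound: "\<And>m. norm (Fcoeff \<rho> a m) \<le> C * \<rho> ^ sum m UNIV"
  shows "norm (a n) \<le> (\<Prod>i\<in>UNIV. real (n i + 1)) * C * \<rho> ^ sum n UNIV"
proof -
  define B where "B = (\<Pi>\<^sub>E i\<in>UNIV. {..n i})"
  have "norm (a n) \<le> (\<Sum>m\<in>B. norm (Fcoeff \<rho> a m) * \<rho> ^ (sum n UNIV - sum m UNIV))"
    unfolding sum_Fcoeff_box[of \<rho> a n, symmetric, folded B_def]
    using \<open>\<rho> \<ge> 0\<close> by (intro norm_sum[THEN order_trans]) (simp add: norm_mult norm_power)
  also have "\<dots> \<le> (\<Sum>m\<in>B. C * \<rho> ^ sum n UNIV)"
  proof (intro sum_mono)
    fix m assume "m \<in> B"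
    then have "sum m UNIV \<le> sum n UNIV"
      by (intro sum_mono) (auto simp: B_def PiE_UNIV_domain)
    then have "\<rho> ^ sum m UNIV * \<rho> ^ (sum n UNIV - sum m UNIV) = \<rho> ^ sum n UNIV"
      by (simp flip: power_add)
    moreover have "norm (Fcoeff \<rho> a m) * \<rho> ^ (sum n UNIV - sum m UNIV)
        \<le> C * \<rho> ^ sum m UNIV * \<rho> ^ (sum n UNIV - sum m UNIV)"
      using bound[of m] \<open>\<rho> \<ge> 0\<close> by (intro mult_right_mono) auto
    ultimately show "norm (Fcoeff \<rho> a m) * \<rho> ^ (sum n UNIV - sum m UNIV) \<le> C * \<rho> ^ sum n UNIV"
      by (simp add: mult.assoc)
  qed
  also have "\<dots> = (\<Prod>i\<in>UNIV. real (n i + 1)) * C * \<rho> ^ sum n UNIV"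
    by (simp add: B_def card_PiE)
  finally show ?thesis .
qed

theorem mainTheorem8:
  fixes a :: "('r::finite \<Rightarrow> nat) \<Rightarrow> complex" and \<rho> :: real
  assumes "\<rho> > 0"
    and "\<exists>\<epsilon>>0. \<forall>z::'r \<Rightarrow> complex. (\<forall>i. norm (z i) \<le> 1 / \<rho> + \<epsilon>) \<longrightarrow>
            (\<lambda>n. norm (Fcoeff \<rho> a n * monomial z n)) summable_on UNIV"
  shows "\<forall>n. norm (a n) \<le> (\<Prod>i\<in>UNIV. real (n i + 1)) * Fnorm \<rho> a * \<rho> ^ (\<Sum>i\<in>UNIV. n i)"
proof
  fix n :: "'r \<Rightarrow> nat"
  obtain \<epsilon> where "\<epsilon> > 0" and summable: "\<forall>z::'r \<Rightarrow> complex. (\<forall>i. norm (z i) \<le> 1 / \<rho> + \<epsilon>) \<longrightarrow>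
      (\<lambda>n. norm (Fcoeff \<rho> a n * monomial z n)) summable_on UNIV"
    using assms(2) by blast
  have "norm (complex_of_real (1 / \<rho>)) \<le> 1 / \<rho> + \<epsilon>"
    using \<open>\<epsilon> > 0\<close> \<open>\<rho> > 0\<close> by (simp add: norm_divide)
  then have "(\<lambda>k. norm (Fcoeff \<rho> a k * monomial (\<lambda>_. of_real (1 / \<rho>)) k)) summable_on UNIV"
    by (intro summable[rule_format] allI)
  then have "norm (Fcoeff \<rho> a m) \<le> Fnorm \<rho> a * \<rho> ^ sum m UNIV" for m
    by (rule norm_Fcoeff_le_Fnorm[OF \<open>\<rho> > 0\<close>])
  then show "norm (a n) \<le> (\<Prod>i\<in>UNIV. real (n i + 1)) * Fnorm \<rho> a * \<rho> ^ (\<Sum>i\<in>UNIV. n i)"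
    by (rule norm_le_of_Fcoeff_bound[OF less_imp_le[OF \<open>\<rho> > 0\<close>]])
qed

end
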